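(* There exist 4-GDDs of types $93^8 318^1$ and $93^8 321^1$.
   Context: A 4-GDD of type $g_1^{u_1}\cdots g_r^{u_r}$ is a triple $(V,\mathcal G,\mathcal B)$ where $V$ is a set of $u_1g_1+\cdots+u_rg_r$ points, $\mathcal G$ is a partition of $V$ into $u_i$ groups of size $g_i$ for each $i$, and $\mathcal B$ is a non-empty collection of 4-element subsets (blocks) such that every pair of points from distinct groups lies in exactly one block and no pair from the same group lies in any block. *)

theory Defs
  imports Main "HOL-Library.Multiset"
begin

definition is_4GDD :: "'a set \<Rightarrow> 'a set set \<Rightarrow> 'a set set \<Rightarrow> bool" where
  "is_4GDD V G B \<longleftrightarrow>
     finite V \<and>
     (\<forall>g\<in>G. g \<noteq> {} \<and> g \<subseteq> V) \<and>
     (\<forall>g\<in>G. \<forall>h\<in>G. g \<noteq> h \<longrightarrow> g \<inter> h = {}) \<and>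
     \<Union>G = V \<and>
     B \<noteq> {} \<and>
     (\<forall>b\<in>B. b \<subseteq> V \<and> card b = 4) \<and>
     (\<forall>x\<in>V. \<forall>y\<in>V. (\<forall>g\<in>G. \<not> (x \<in> g \<and> y \<in> g)) \<longrightarrow> (\<exists>!b. b \<in> B \<and> x \<in> b \<and> y \<in> b)) \<and>
     (\<forall>g\<in>G. \<forall>x\<in>g. \<forall>y\<in>g. x \<noteq> y \<longrightarrow> \<not> (\<exists>b\<in>B. x \<in> b \<and> y \<in> b))"

text \<open>The type of a GDD: the multiset of its group sizes.
 Type g1^u1 ... gr^ur corresponds to the multiset with g_i occurring u_i times.\<close>

definition gdd_type :: "'a set set \<Rightarrow> nat multiset" where
  "gdd_type G = image_mset card (mset_set G)"

definition has_4GDD_of_type :: "nat multiset \<Rightarrow> bool" where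
  "has_4GDD_of_type T \<longleftrightarrow>
     (\<exists>(V::nat set) G B. is_4GDD V G B \<and> gdd_type G = T)"

end

theory Submission
  imports Defs "HOL-Library.Countable"
begin

text \<open>Both designs come from Wilson's fundamental construction with weight 3. The master
  design has the points \<open>\<int>\<^sub>3\<^sub>1 \<times> {0..7}\<close> in eight groups of size 31 together with a long
  group of \<open>N = 106\<close> resp. \<open>107\<close> points, and its blocks are the translates modulo 31 of base
  blocks with 3, 4 or 5 points of \<open>\<int>\<^sub>3\<^sub>1 \<times> {0..7}\<close> and at most two long-group points. Each
  pair of groups \<open>i < j\<close> realises every difference modulo 31 exactly once and each long-group
  point meets every group exactly once, so that every pair of points from different groups lies
  in exactly one block. Inflating every point by 3 and filling each block with a 4-GDD of type
  \<open>3\<^sup>4\<close>, \<open>3\<^sup>5\<close> or \<open>3\<^sup>5 6\<^sup>1\<close> (a block with two long-group points gets a group of size 6)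
  yields a 4-GDD of type \<open>93\<^sup>8 (3N)\<^sup>1\<close>.\<close>

section \<open>Group divisible designs\<close>

lemma is_4GDD_E:
  assumes "is_4GDD V G B"
  obtains "finite V" "\<forall>g\<in>G. g \<noteq> {} \<and> g \<subseteq> V" "\<forall>g\<in>G. \<forall>h\<in>G. g \<noteq> h \<longrightarrow> g \<inter> h = {}"
    "\<Union>G = V" "B \<noteq> {}" "\<forall>b\<in>B. b \<subseteq> V \<and> card b = 4"
    "\<forall>x\<in>V. \<forall>y\<in>V. (\<forall>g\<in>G. \<not> (x \<in> g \<and> y \<in> g)) \<longrightarrow> (\<exists>!b. b \<in> B \<and> x \<in> b \<and> y \<in> b)"
    "\<forall>g\<in>G. \<forall>x\<in>g. \<forall>y\<in>g. x \<noteq> y \<longrightarrow> \<not> (\<exists>b\<in>B. x \<in> b \<and> y \<in> b)"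
  using assms unfolding is_4GDD_def by (elim conjE) (rule that)

lemma is_4GDD_I:
  assumes "finite V" "\<forall>g\<in>G. g \<noteq> {} \<and> g \<subseteq> V" "\<forall>g\<in>G. \<forall>h\<in>G. g \<noteq> h \<longrightarrow> g \<inter> h = {}"
    "\<Union>G = V" "B \<noteq> {}" "\<forall>b\<in>B. b \<subseteq> V \<and> card b = 4"
    "\<forall>x\<in>V. \<forall>y\<in>V. (\<forall>g\<in>G. \<not> (x \<in> g \<and> y \<in> g)) \<longrightarrow> (\<exists>!b. b \<in> B \<and> x \<in> b \<and> y \<in> b)"
    "\<forall>g\<in>G. \<forall>x\<in>g. \<forall>y\<in>g. x \<noteq> y \<longrightarrow> \<not> (\<exists>b\<in>B. x \<in> b \<and> y \<in> b)"
  shows "is_4GDD V G B"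
  unfolding is_4GDD_def using assms by (intro conjI)

lemma is_4GDD_block_subset: "is_4GDD V G B \<Longrightarrow> b \<in> B \<Longrightarrow> b \<subseteq> V"
  by (simp add: is_4GDD_def)

lemma is_4GDD_blocks_nonempty: "is_4GDD V G B \<Longrightarrow> B \<noteq> {}"
  by (simp add: is_4GDD_def)

lemma is_4GDD_card_block: "is_4GDD V G B \<Longrightarrow> b \<in> B \<Longrightarrow> card b = 4"
  by (simp add: is_4GDD_def)

lemma is_4GDD_cross_pair:
  assumes "is_4GDD V G B" "x \<in> V" "y \<in> V" "\<not> (\<exists>g\<in>G. x \<in> g \<and> y \<in> g)"
  shows "\<exists>!b. b \<in> B \<and> x \<in> b \<and> y \<in> b"
proof -
  have "\<forall>x\<in>V. \<forall>y\<in>V. (\<forall>g\<in>G. \<not> (x \<in> g \<and> y \<in> g)) \<longrightarrow> (\<exists>!b. b \<in> B \<and> x \<in> b \<and> y \<in> b)"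
    using assms(1) unfolding is_4GDD_def by (elim conjE) assumption
  then show ?thesis
    using assms(2-4) by blast
qed

lemma is_4GDD_group_pair:
  "is_4GDD V G B \<Longrightarrow> g \<in> G \<Longrightarrow> x \<in> g \<Longrightarrow> y \<in> g \<Longrightarrow> x \<noteq> y \<Longrightarrow> b \<in> B \<Longrightarrow> x \<in> b \<Longrightarrow> y \<in> b \<Longrightarrow> False"
  unfolding is_4GDD_def by (elim conjE) (drule bspec, assumption, fast)

lemma ex1_in_image_iff:
  assumes "inj_on f A"
  shows "(\<exists>!y. y \<in> f ` A \<and> P y) \<longleftrightarrow> (\<exists>!x. x \<in> A \<and> P (f x))"
proof
  assume "\<exists>!y. y \<in> f ` A \<and> P y"
  then obtain x where "x \<in> A" "P (f x)" "\<And>y. y \<in> f ` A \<Longrightarrow> P y \<Longrightarrow> y = f x" by blast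
  then show "\<exists>!x. x \<in> A \<and> P (f x)" using assms by (metis image_eqI inj_on_def)
next
  assume "\<exists>!x. x \<in> A \<and> P (f x)"
  then show "\<exists>!y. y \<in> f ` A \<and> P y" by blast
qed

lemma is_4GDD_image:
  assumes D: "is_4GDD V G B" and inj: "inj_on h V"
  shows "is_4GDD (h ` V) ((`) h ` G) ((`) h ` B)"
proof -
  obtain fin: "finite V" and groups: "\<forall>g\<in>G. g \<noteq> {} \<and> g \<subseteq> V"
    and disj: "\<forall>g\<in>G. \<forall>g'\<in>G. g \<noteq> g' \<longrightarrow> g \<inter> g' = {}" and union: "\<Union>G = V"
    and nonempty: "B \<noteq> {}" and blocks: "\<forall>b\<in>B. b \<subseteq> V \<and> card b = 4"
    and cover: "\<forall>x\<in>V. \<forall>y\<in>V. (\<forall>g\<in>G. \<not> (x \<in> g \<and> y \<in> g)) \<longrightarrow> (\<exists>!b. b \<in> B \<and> x \<in> b \<and> y \<in> b)"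
    and apart: "\<forall>g\<in>G. \<forall>x\<in>g. \<forall>y\<in>g. x \<noteq> y \<longrightarrow> \<not> (\<exists>b\<in>B. x \<in> b \<and> y \<in> b)"
    using D by (rule is_4GDD_E)
  have mem: "h x \<in> h ` S \<longleftrightarrow> x \<in> S" if "S \<subseteq> V" "x \<in> V" for S x
    using inj_on_image_mem_iff[OF inj that(2,1)] .
  have mem_group: "h x \<in> h ` g \<longleftrightarrow> x \<in> g" if "g \<in> G" "x \<in> V" for g x
    using mem groups that by blast
  have mem_block: "h x \<in> h ` b \<longleftrightarrow> x \<in> b" if "b \<in> B" "x \<in> V" for b x
    using mem blocks that by blast
  have inj_blocks: "inj_on ((`) h) B"
    using blocks by (intro inj_on_subset[OF inj_on_image_Pow[OF inj]]) auto
  show ?thesis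
  proof (rule is_4GDD_I)
    show "\<forall>b\<in>(`) h ` B. b \<subseteq> h ` V \<and> card b = 4"
      using blocks inj by (auto simp: card_image inj_on_subset)
    show "\<forall>g\<in>(`) h ` G. \<forall>g'\<in>(`) h ` G. g \<noteq> g' \<longrightarrow> g \<inter> g' = {}"
    proof (intro ballI impI)
      fix g g' assume "g \<in> (`) h ` G" "g' \<in> (`) h ` G" "g \<noteq> g'"
      then obtain g0 g0' where "g0 \<in> G" "g0' \<in> G" "g0 \<noteq> g0'" "g = h ` g0" "g' = h ` g0'" by auto
      then show "g \<inter> g' = {}"
        using disj groups inj_on_image_Int[OF inj, of g0 g0'] by simp
    qed
    show "\<forall>x\<in>h ` V. \<forall>y\<in>h ` V. (\<forall>g\<in>(`) h ` G. \<not> (x \<in> g \<and> y \<in> g)) \<longrightarrow>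
        (\<exists>!b. b \<in> (`) h ` B \<and> x \<in> b \<and> y \<in> b)"
      unfolding ex1_in_image_iff[OF inj_blocks] using cover
      by (simp add: mem_group mem_block cong: conj_cong ball_cong)
    show "\<forall>g\<in>(`) h ` G. \<forall>x\<in>g. \<forall>y\<in>g. x \<noteq> y \<longrightarrow> \<not> (\<exists>b\<in>(`) h ` B. x \<in> b \<and> y \<in> b)"
    proof (intro ballI impI notI)
      fix g x y assume "g \<in> (`) h ` G" "x \<in> g" "y \<in> g" "x \<noteq> y"
        and "\<exists>b\<in>(`) h ` B. x \<in> b \<and> y \<in> b"
      then obtain g0 b0 x0 y0 where g0: "g0 \<in> G" and b0: "b0 \<in> B" and "x0 \<in> g0" "y0 \<in> g0"
        and "x = h x0" "y = h y0" "x \<in> h ` b0" "y \<in> h ` b0"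
        by auto
      moreover from this have "x0 \<in> V" "y0 \<in> V" using groups by auto
      ultimately show False using apart mem_block \<open>x \<noteq> y\<close> by metis
    qed
  qed (use fin groups union nonempty in auto)
qed

lemma gdd_type_image:
  assumes "inj h"
  shows "gdd_type ((`) h ` G) = gdd_type G"
proof -
  have "inj_on ((`) h) G"
    using assms by (simp add: inj_on_def inj_image_eq_iff)
  then have "mset_set ((`) h ` G) = image_mset ((`) h) (mset_set G)"
    by (simp add: image_mset_mset_set)
  moreover have "card (h ` g) = card g" for g
    using assms by (simp add: card_image inj_on_subset)
  ultimately show ?thesis
    unfolding gdd_type_def by (simp add: multiset.map_comp comp_def)
qed

lemma has_4GDD_of_type_if_countable:
  fixes V :: "'a::countable set"
  assumes "is_4GDD V G B"
  shows "has_4GDD_of_type (gdd_type G)"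
proof -
  have "is_4GDD (to_nat ` V) ((`) to_nat ` G) ((`) to_nat ` B)"
    using is_4GDD_image[OF assms inj_on_subset[OF inj_to_nat subset_UNIV]] .
  then show ?thesis
    unfolding has_4GDD_of_type_def using gdd_type_image[OF inj_to_nat, of G] by blast
qed

section \<open>Wilson's fundamental construction\<close>

text \<open>Unlike in a GDD, a block may meet a group in several points.\<close>

definition cross_pair_design :: "'a set \<Rightarrow> 'a set set \<Rightarrow> 'a set set \<Rightarrow> bool" where
  "cross_pair_design V G B \<longleftrightarrow>
     finite V \<and>
     (\<forall>g\<in>G. g \<noteq> {} \<and> g \<subseteq> V) \<and>
     (\<forall>g\<in>G. \<forall>h\<in>G. g \<noteq> h \<longrightarrow> g \<inter> h = {}) \<and>
     \<Union>G = V \<and>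
     B \<noteq> {} \<and>
     (\<forall>b\<in>B. b \<subseteq> V) \<and>
     (\<forall>x\<in>V. \<forall>y\<in>V. (\<forall>g\<in>G. \<not> (x \<in> g \<and> y \<in> g)) \<longrightarrow> (\<exists>!b. b \<in> B \<and> x \<in> b \<and> y \<in> b))"

lemma cross_pair_design_E:
  assumes "cross_pair_design V G B"
  obtains "finite V" "\<forall>g\<in>G. g \<noteq> {} \<and> g \<subseteq> V" "\<forall>g\<in>G. \<forall>h\<in>G. g \<noteq> h \<longrightarrow> g \<inter> h = {}"
    "\<Union>G = V" "B \<noteq> {}" "\<forall>b\<in>B. b \<subseteq> V"
    "\<forall>x\<in>V. \<forall>y\<in>V. (\<forall>g\<in>G. \<not> (x \<in> g \<and> y \<in> g)) \<longrightarrow> (\<exists>!b. b \<in> B \<and> x \<in> b \<and> y \<in> b)"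
  using assms unfolding cross_pair_design_def by (elim conjE) (rule that)

definition is_ingredient :: "'a set set \<Rightarrow> 'w set \<Rightarrow> 'a set \<Rightarrow> ('a \<times> 'w) set set \<Rightarrow> ('a \<times> 'w) set set \<Rightarrow> bool" where
  "is_ingredient GM W \<beta> IG I \<longleftrightarrow> is_4GDD (\<beta> \<times> W) IG I \<and>
     (\<forall>x\<in>\<beta> \<times> W. \<forall>y\<in>\<beta> \<times> W. (\<exists>g\<in>IG. x \<in> g \<and> y \<in> g) \<longleftrightarrow> (\<exists>G\<in>GM. fst x \<in> G \<and> fst y \<in> G))"

locale wilson_inflation =
  fixes P :: "'a set" and GM MB :: "'a set set" and W :: "'w set"
    and IG I :: "'a set \<Rightarrow> ('a \<times> 'w) set set"
  assumes master: "cross_pair_design P GM MB"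
    and finite_weights: "finite W" and weights_nonempty: "W \<noteq> {}"
    and ingredients: "\<And>\<beta>. \<beta> \<in> MB \<Longrightarrow> is_ingredient GM W \<beta> (IG \<beta>) (I \<beta>)"
begin

lemma ingredient: "\<beta> \<in> MB \<Longrightarrow> is_4GDD (\<beta> \<times> W) (IG \<beta>) (I \<beta>)"
  using ingredients unfolding is_ingredient_def by blast

lemma ingredient_groups:
  assumes "\<beta> \<in> MB" "x \<in> \<beta> \<times> W" "y \<in> \<beta> \<times> W"
  shows "(\<exists>g\<in>IG \<beta>. x \<in> g \<and> y \<in> g) \<longleftrightarrow> (\<exists>G\<in>GM. fst x \<in> G \<and> fst y \<in> G)"
proof -
  have "\<forall>x\<in>\<beta> \<times> W. \<forall>y\<in>\<beta> \<times> W. (\<exists>g\<in>IG \<beta>. x \<in> g \<and> y \<in> g) \<longleftrightarrow> (\<exists>G\<in>GM. fst x \<in> G \<and> fst y \<in> G)"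
    using ingredients[OF assms(1)] unfolding is_ingredient_def by (elim conjE)
  then show ?thesis
    using assms(2,3) by (elim ballE) auto
qed

lemma ingredient_block_subset: "\<beta> \<in> MB \<Longrightarrow> c \<in> I \<beta> \<Longrightarrow> c \<subseteq> \<beta> \<times> W"
  using ingredient by (rule is_4GDD_block_subset)

lemma inflated_cross_pair_covered_once:
  assumes x: "x \<in> P \<times> W" and y: "y \<in> P \<times> W" and apart: "\<forall>G\<in>GM. \<not> (fst x \<in> G \<and> fst y \<in> G)"
  shows "\<exists>!c. c \<in> (\<Union>\<beta>\<in>MB. I \<beta>) \<and> x \<in> c \<and> y \<in> c"
proof -
  obtain master_cover: "\<forall>p\<in>P. \<forall>q\<in>P. (\<forall>G\<in>GM. \<not> (p \<in> G \<and> q \<in> G)) \<longrightarrow> (\<exists>!b. b \<in> MB \<and> p \<in> b \<and> q \<in> b)"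
    using master by (rule cross_pair_design_E)
  obtain \<beta> where \<beta>: "\<beta> \<in> MB" "fst x \<in> \<beta>" "fst y \<in> \<beta>"
    and \<beta>_unique: "\<And>\<beta>'. \<beta>' \<in> MB \<Longrightarrow> fst x \<in> \<beta>' \<Longrightarrow> fst y \<in> \<beta>' \<Longrightarrow> \<beta>' = \<beta>"
    using master_cover x y apart by (metis mem_Times_iff)
  have in_\<beta>: "x \<in> \<beta> \<times> W" "y \<in> \<beta> \<times> W"
    using x y \<beta> by (auto simp: mem_Times_iff)
  have "\<not> (\<exists>g\<in>IG \<beta>. x \<in> g \<and> y \<in> g)"
    using ingredient_groups[OF \<beta>(1) in_\<beta>] apart by simp
  then obtain c where c: "c \<in> I \<beta>" "x \<in> c" "y \<in> c"
    and c_unique: "\<And>c'. c' \<in> I \<beta> \<Longrightarrow> x \<in> c' \<Longrightarrow> y \<in> c' \<Longrightarrow> c' = c"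
    using is_4GDD_cross_pair[OF ingredient[OF \<beta>(1)] in_\<beta>] by metis
  have "\<beta>' = \<beta>" if "\<beta>' \<in> MB" "c' \<in> I \<beta>'" "x \<in> c'" "y \<in> c'" for \<beta>' c'
  proof (rule \<beta>_unique[OF that(1)])
    show "fst x \<in> \<beta>'" "fst y \<in> \<beta>'"
      using ingredient_block_subset[OF that(1,2)] that(3,4) by (auto simp: mem_Times_iff)
  qed
  then show ?thesis
    using c c_unique \<beta>(1) by (intro ex1I[of _ c]) blast+
qed

lemma inflated_group_pair_uncovered:
  assumes G: "G \<in> GM" and x: "x \<in> G \<times> W" and y: "y \<in> G \<times> W" and "x \<noteq> y"
    and \<beta>: "\<beta> \<in> MB" and c: "c \<in> I \<beta>" "x \<in> c" "y \<in> c"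
  shows False
proof -
  have in_\<beta>: "x \<in> \<beta> \<times> W" "y \<in> \<beta> \<times> W"
    using ingredient_block_subset[OF \<beta> c(1)] c by auto
  moreover have "fst x \<in> G" "fst y \<in> G"
    using x y by auto
  ultimately obtain g where "g \<in> IG \<beta>" "x \<in> g" "y \<in> g"
    using ingredient_groups[OF \<beta>] G by blast
  then show False
    using is_4GDD_group_pair[OF ingredient[OF \<beta>]] \<open>x \<noteq> y\<close> c by blast
qed

lemma is_4GDD_inflation: "is_4GDD (P \<times> W) ((\<lambda>G. G \<times> W) ` GM) (\<Union>\<beta>\<in>MB. I \<beta>)"
proof -
  obtain finite_P: "finite P" and groups: "\<forall>G\<in>GM. G \<noteq> {} \<and> G \<subseteq> P"
    and disjoint: "\<forall>G\<in>GM. \<forall>G'\<in>GM. G \<noteq> G' \<longrightarrow> G \<inter> G' = {}" and union: "\<Union>GM = P"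
    and "MB \<noteq> {}" and blocks: "\<forall>b\<in>MB. b \<subseteq> P"
    using master by (rule cross_pair_design_E)
  show ?thesis
  proof (rule is_4GDD_I)
    show "finite (P \<times> W)"
      using finite_P finite_weights by simp
    show "\<forall>g\<in>(\<lambda>G. G \<times> W) ` GM. g \<noteq> {} \<and> g \<subseteq> P \<times> W"
      using groups weights_nonempty by auto
    show "\<forall>g\<in>(\<lambda>G. G \<times> W) ` GM. \<forall>g'\<in>(\<lambda>G. G \<times> W) ` GM. g \<noteq> g' \<longrightarrow> g \<inter> g' = {}"
      using disjoint by (auto simp: Times_Int_distrib1[symmetric])
    show "\<Union> ((\<lambda>G. G \<times> W) ` GM) = P \<times> W"
      using union by auto
    show "(\<Union>\<beta>\<in>MB. I \<beta>) \<noteq> {}"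
      using \<open>MB \<noteq> {}\<close> is_4GDD_blocks_nonempty[OF ingredient] by blast
    show "\<forall>c\<in>\<Union>\<beta>\<in>MB. I \<beta>. c \<subseteq> P \<times> W \<and> card c = 4"
      using is_4GDD_card_block[OF ingredient] ingredient_block_subset blocks by blast
    show "\<forall>x\<in>P \<times> W. \<forall>y\<in>P \<times> W. (\<forall>g\<in>(\<lambda>G. G \<times> W) ` GM. \<not> (x \<in> g \<and> y \<in> g)) \<longrightarrow>
        (\<exists>!c. c \<in> (\<Union>\<beta>\<in>MB. I \<beta>) \<and> x \<in> c \<and> y \<in> c)"
      using inflated_cross_pair_covered_once by (auto simp: mem_Times_iff)
    show "\<forall>g\<in>(\<lambda>G. G \<times> W) ` GM. \<forall>x\<in>g. \<forall>y\<in>g. x \<noteq> y \<longrightarrow> \<not> (\<exists>c\<in>\<Union>\<beta>\<in>MB. I \<beta>. x \<in> c \<and> y \<in> c)"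
    proof (intro ballI impI notI)
      fix g x y assume "g \<in> (\<lambda>G. G \<times> W) ` GM" "x \<in> g" "y \<in> g" "x \<noteq> y"
        and "\<exists>c\<in>\<Union>\<beta>\<in>MB. I \<beta>. x \<in> c \<and> y \<in> c"
      then obtain G \<beta> c where "G \<in> GM" "x \<in> G \<times> W" "y \<in> G \<times> W" "\<beta> \<in> MB" "c \<in> I \<beta>" "x \<in> c" "y \<in> c"
        by blast
      then show False
        using inflated_group_pair_uncovered \<open>x \<noteq> y\<close> by metis
    qed
  qed
qed

end

lemma wilson_fundamental_construction:
  assumes "cross_pair_design P GM MB" and "finite W" and "W \<noteq> {}"
    and "\<And>\<beta>. \<beta> \<in> MB \<Longrightarrow> \<exists>IG I. is_ingredient GM W \<beta> IG I"
  shows "\<exists>B. is_4GDD (P \<times> W) ((\<lambda>G. G \<times> W) ` GM) B"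
proof -
  obtain IG I where "\<And>\<beta>. \<beta> \<in> MB \<Longrightarrow> is_ingredient GM W \<beta> (IG \<beta>) (I \<beta>)"
    using assms(4) by metis
  with assms(1-3) interpret wilson_inflation P GM MB W IG I
    by unfold_locales
  show ?thesis
    using is_4GDD_inflation by blast
qed

section \<open>The master design\<close>

lemma nat_mod_diff_as_int:
  assumes "b < n"
  shows "int ((a + n - b) mod n) = (int a - int b) mod int n"
proof -
  have "int (a + n - b) = (int a - int b) + int n"
    using assms by simp
  then show ?thesis
    by (simp only: of_nat_mod mod_add_self2)
qed

lemma mod_add_diff_cancel:
  fixes s v n :: nat
  assumes "s < n" "v < n"
  shows "(s + (v + n - s) mod n) mod n = v"
proof -
  have "(s + (v + n - s) mod n) mod n = (s + (v + n - s)) mod n"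
    by (rule mod_add_right_eq)
  also have "s + (v + n - s) = v + n"
    using assms(1) by simp
  finally show ?thesis
    using assms(2) by simp
qed

lemma mod_diff_translate:
  fixes s t g n :: nat
  assumes "s < n" "t < n"
  shows "((t + g) mod n + n - (s + g) mod n) mod n = (t + n - s) mod n"
proof -
  have "int (((t + g) mod n + n - (s + g) mod n) mod n) = (int ((t + g) mod n) - int ((s + g) mod n)) mod int n"
    using assms by (simp add: nat_mod_diff_as_int)
  also have "\<dots> = (int t - int s) mod int n"
    by (simp add: of_nat_mod mod_diff_eq)
  also have "\<dots> = int ((t + n - s) mod n)"
    using assms by (simp add: nat_mod_diff_as_int)
  finally show ?thesis by simp
qed

lemma mod_add_left_cancel_less:
  fixes g1 g2 s n :: nat
  assumes "g1 < n" "g2 < n" "(s + g1) mod n = (s + g2) mod n"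
  shows "g1 = g2"
proof -
  have "int (s + g1) mod int n = int (s + g2) mod int n"
    using assms(3) by (simp only: of_nat_mod[symmetric])
  then have "(int (s + g1) - int s) mod int n = (int (s + g2) - int s) mod int n"
    by (rule mod_diff_cong) simp
  then have "int g1 mod int n = int g2 mod int n"
    by simp
  then show ?thesis
    using assms(1,2) by simp
qed

text \<open>\<open>Inl (x, i)\<close> is the residue \<open>x\<close> modulo \<open>n\<close> in the \<open>i\<close>-th group and \<open>Inr f\<close> is the
  \<open>f\<close>-th point of the long group; a base block lists its points of either kind, and
  translation fixes the points of the long group.\<close>

type_synonym master_point = "(nat \<times> nat) + nat"
type_synonym base_block = "(nat \<times> nat) list \<times> nat list"

definition translate :: "nat \<Rightarrow> nat \<Rightarrow> master_point \<Rightarrow> master_point" where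
  "translate n g = map_sum (\<lambda>(x, i). ((x + g) mod n, i)) id"

definition block_points :: "base_block \<Rightarrow> master_point list" where
  "block_points B = map Inl (fst B) @ map Inr (snd B)"

definition develop :: "nat \<Rightarrow> nat \<Rightarrow> base_block \<Rightarrow> master_point set" where
  "develop n g B = translate n g ` set (block_points B)"

definition master_points :: "nat \<Rightarrow> nat \<Rightarrow> nat \<Rightarrow> master_point set" where
  "master_points n m N = Inl ` ({0..<n} \<times> {0..<m}) \<union> Inr ` {0..<N}"

definition master_groups :: "nat \<Rightarrow> nat \<Rightarrow> nat \<Rightarrow> master_point set set" where
  "master_groups n m N = (\<lambda>i. Inl ` ({0..<n} \<times> {i})) ` {0..<m} \<union> {Inr ` {0..<N}}"

definition master_blocks :: "nat \<Rightarrow> base_block list \<Rightarrow> master_point set set" where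
  "master_blocks n base = (\<lambda>(B, g). develop n g B) ` (set base \<times> {0..<n})"

definition label_differences :: "nat \<Rightarrow> nat \<Rightarrow> nat \<Rightarrow> base_block \<Rightarrow> nat list" where
  "label_differences n i j B = [(fst q + n - fst p) mod n. p \<leftarrow> fst B, snd p = i, q \<leftarrow> fst B, snd q = j]"

definition labels_through :: "nat \<Rightarrow> base_block \<Rightarrow> nat list" where
  "labels_through f B = (if f \<in> set (snd B) then map snd (fst B) else [])"

definition admissible_base_block :: "nat \<Rightarrow> nat \<Rightarrow> nat \<Rightarrow> base_block \<Rightarrow> bool" where
  "admissible_base_block n m N B \<longleftrightarrow>
     (\<forall>p\<in>set (fst B). fst p < n \<and> snd p < m) \<and> distinct (map snd (fst B)) \<and>
     (\<forall>f\<in>set (snd B). f < N) \<and> distinct (snd B)"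

definition difference_family :: "nat \<Rightarrow> nat \<Rightarrow> nat \<Rightarrow> base_block list \<Rightarrow> bool" where
  "difference_family n m N base \<longleftrightarrow> base \<noteq> [] \<and> (\<forall>B\<in>set base. admissible_base_block n m N B) \<and>
     (\<forall>j<m. \<forall>i<j. sort (concat (map (label_differences n i j) base)) = [0..<n]) \<and>
     (\<forall>f<N. sort (concat (map (labels_through f) base)) = [0..<m])"

text \<open>Quantifying over explicit lists lets \<open>code_simp\<close> visit only the pairs \<open>i < j\<close>.\<close>

lemma difference_family_code [code]:
  "difference_family n m N base \<longleftrightarrow> base \<noteq> [] \<and> (\<forall>B\<in>set base. admissible_base_block n m N B) \<and>
     (\<forall>j\<in>set [0..<m]. \<forall>i\<in>set [0..<j]. sort (concat (map (label_differences n i j) base)) = [0..<n]) \<and>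
     (\<forall>f\<in>set [0..<N]. sort (concat (map (labels_through f) base)) = [0..<m])"
  unfolding difference_family_def by (simp add: atLeast0LessThan Ball_def)

lemma translate_simps [simp]:
  "translate n g (Inl (x, i)) = Inl ((x + g) mod n, i)"
  "translate n g (Inr f) = Inr f"
  by (simp_all add: translate_def)

lemma Inl_in_develop_iff:
  "Inl (v, i) \<in> develop n g B \<longleftrightarrow> (\<exists>p\<in>set (fst B). (fst p + g) mod n = v \<and> snd p = i)"
  unfolding develop_def block_points_def by force

lemma Inr_in_develop_iff: "Inr f \<in> develop n g B \<longleftrightarrow> f \<in> set (snd B)"
  unfolding develop_def block_points_def by force

lemma in_label_differences_iff:
  "d \<in> set (label_differences n i j B) \<longleftrightarrow>
    (\<exists>p\<in>set (fst B). \<exists>q\<in>set (fst B). snd p = i \<and> snd q = j \<and> d = (fst q + n - fst p) mod n)"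
  unfolding label_differences_def by force

lemma in_labels_through_iff:
  "i \<in> set (labels_through f B) \<longleftrightarrow> f \<in> set (snd B) \<and> (\<exists>p\<in>set (fst B). snd p = i)"
  unfolding labels_through_def by auto

lemma sort_eq_upt_iff: "sort xs = [0..<n] \<longleftrightarrow> distinct xs \<and> set xs = {0..<n}"
  by (metis distinct_upt set_upt distinct_sort set_sort sorted_distinct_set_unique sorted_sort sorted_upt)

lemma distinct_concat_map_unique:
  assumes "distinct (concat (map f xs))" "a \<in> set xs" "b \<in> set xs" "z \<in> set (f a)" "z \<in> set (f b)"
  shows "a = b"
  using assms
proof (induction xs)
  case (Cons x xs)
  then show ?case by (fastforce simp: disjoint_iff)
qed simp

lemma difference_familyD:
  assumes "difference_family n m N base"
  shows "base \<noteq> []"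
    and "B \<in> set base \<Longrightarrow> admissible_base_block n m N B"
    and "i < j \<Longrightarrow> j < m \<Longrightarrow>
      distinct (concat (map (label_differences n i j) base)) \<and> set (concat (map (label_differences n i j) base)) = {0..<n}"
    and "f < N \<Longrightarrow>
      distinct (concat (map (labels_through f) base)) \<and> set (concat (map (labels_through f) base)) = {0..<m}"
  using assms unfolding difference_family_def sort_eq_upt_iff[symmetric] by auto

lemma admissible_base_blockD:
  assumes "admissible_base_block n m N B"
  shows "p \<in> set (fst B) \<Longrightarrow> fst p < n \<and> snd p < m"
    and "distinct (map snd (fst B))"
    and "f \<in> set (snd B) \<Longrightarrow> f < N"
    and "distinct (snd B)"
  using assms unfolding admissible_base_block_def by auto

lemma same_label_unique:
  "distinct (map snd xs) \<Longrightarrow> p \<in> set xs \<Longrightarrow> q \<in> set xs \<Longrightarrow> snd p = snd q \<Longrightarrow> p = q"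
  by (metis distinct_map inj_onD)

lemma develop_in_master_blocks: "B \<in> set base \<Longrightarrow> g < n \<Longrightarrow> develop n g B \<in> master_blocks n base"
  unfolding master_blocks_def by force

lemma master_blocksE:
  assumes "\<beta> \<in> master_blocks n base"
  obtains B g where "B \<in> set base" "g < n" "\<beta> = develop n g B"
  using assms unfolding master_blocks_def by force

lemma develop_offset_unique:
  assumes admissible: "admissible_base_block n m N B" and "g < n" "g' < n"
    and "Inl (v, i) \<in> develop n g B" "Inl (v, i) \<in> develop n g' B"
  shows "g = g'"
proof -
  obtain p p' where p: "p \<in> set (fst B)" "(fst p + g) mod n = v" "snd p = i"
    and p': "p' \<in> set (fst B)" "(fst p' + g') mod n = v" "snd p' = i"
    using assms(4,5) unfolding Inl_in_develop_iff by blast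
  have "p' = p"
    using same_label_unique[OF admissible_base_blockD(2)[OF admissible]] p p' by simp
  then show ?thesis
    using mod_add_left_cancel_less[OF assms(2,3), of "fst p"] p(2) p'(2) by simp
qed

lemma develop_label_difference:
  assumes admissible: "admissible_base_block n m N B"
    and "Inl (v, i) \<in> develop n g B" "Inl (w, j) \<in> develop n g B"
  shows "(w + n - v) mod n \<in> set (label_differences n i j B)"
proof -
  obtain p q where p: "p \<in> set (fst B)" "(fst p + g) mod n = v" "snd p = i"
    and q: "q \<in> set (fst B)" "(fst q + g) mod n = w" "snd q = j"
    using assms(2,3) unfolding Inl_in_develop_iff by blast
  have "fst p < n" "fst q < n"
    using admissible_base_blockD(1)[OF admissible] p(1) q(1) by auto
  then have "(w + n - v) mod n = (fst q + n - fst p) mod n"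
    using mod_diff_translate[of "fst p" n "fst q" g] p(2) q(2) by simp
  then show ?thesis
    using p q unfolding in_label_differences_iff by blast
qed

lemma label_difference_in_develop:
  assumes admissible: "admissible_base_block n m N B"
    and d: "(w + n - v) mod n \<in> set (label_differences n i j B)" and v: "v < n" and w: "w < n"
  obtains g where "g < n" "Inl (v, i) \<in> develop n g B" "Inl (w, j) \<in> develop n g B"
proof -
  obtain p q where pq: "p \<in> set (fst B)" "q \<in> set (fst B)" "snd p = i" "snd q = j"
    and diff: "(w + n - v) mod n = (fst q + n - fst p) mod n"
    using d unfolding in_label_differences_iff by blast
  have p_less: "fst p < n"
    using admissible_base_blockD(1)[OF admissible] pq(1) by auto
  define g where "g = (v + n - fst p) mod n"
  have p_to_v: "(fst p + g) mod n = v"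
    using mod_add_diff_cancel[OF p_less v] by (simp add: g_def)
  have "fst p + g + (fst q + n - fst p) = (fst q + g) + n"
    using p_less by simp
  then have "(fst q + g) mod n = ((fst p + g) mod n + (fst q + n - fst p) mod n) mod n"
    by (metis mod_add_eq mod_add_self2)
  also have "\<dots> = w"
    using mod_add_diff_cancel[OF v w] p_to_v diff by simp
  finally have "Inl (w, j) \<in> develop n g B"
    using pq(2,4) unfolding Inl_in_develop_iff by blast
  moreover have "Inl (v, i) \<in> develop n g B"
    using pq(1,3) p_to_v unfolding Inl_in_develop_iff by blast
  moreover have "g < n"
    using v by (simp add: g_def)
  ultimately show ?thesis
    using that by blast
qed

lemma finite_pair_in_unique_developed_block:
  assumes D: "difference_family n m N base" and v: "v < n" and w: "w < n" and ij: "i < j" "j < m"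
  shows "\<exists>!\<beta>. \<beta> \<in> master_blocks n base \<and> Inl (v, i) \<in> \<beta> \<and> Inl (w, j) \<in> \<beta>"
proof -
  note diffs = difference_familyD(3)[OF D ij] and admissible = difference_familyD(2)[OF D]
  have "(w + n - v) mod n \<in> set (concat (map (label_differences n i j) base))"
    using diffs v by simp
  then obtain B where B: "B \<in> set base" "(w + n - v) mod n \<in> set (label_differences n i j B)"
    by auto
  obtain g where g: "g < n" "Inl (v, i) \<in> develop n g B" "Inl (w, j) \<in> develop n g B"
    using label_difference_in_develop[OF admissible[OF B(1)] B(2) v w] .
  show ?thesis
  proof (rule ex1I)
    show "develop n g B \<in> master_blocks n base \<and> Inl (v, i) \<in> develop n g B \<and> Inl (w, j) \<in> develop n g B"
      using develop_in_master_blocks[OF B(1) g(1)] g(2,3) by blast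
  next
    fix \<beta> assume \<beta>: "\<beta> \<in> master_blocks n base \<and> Inl (v, i) \<in> \<beta> \<and> Inl (w, j) \<in> \<beta>"
    then obtain B' g' where B': "B' \<in> set base" "g' < n" "\<beta> = develop n g' B'"
      by (auto elim: master_blocksE)
    have "B' = B"
      using develop_label_difference[OF admissible[OF B'(1)], of v i g' w j] \<beta> B'(3)
        distinct_concat_map_unique[OF conjunct1[OF diffs] B'(1) B(1) _ B(2)] by blast
    then show "\<beta> = develop n g B"
      using develop_offset_unique[OF admissible[OF B(1)] g(1) B'(2) g(2)] \<beta> B'(3) by simp
  qed
qed

lemma finite_infinite_pair_in_unique_developed_block:
  assumes D: "difference_family n m N base" and v: "v < n" and i: "i < m" and f: "f < N"
  shows "\<exists>!\<beta>. \<beta> \<in> master_blocks n base \<and> Inl (v, i) \<in> \<beta> \<and> Inr f \<in> \<beta>"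
proof -
  note labels = difference_familyD(4)[OF D f] and admissible = difference_familyD(2)[OF D]
  have "i \<in> set (concat (map (labels_through f) base))"
    using labels i by simp
  then obtain B where B: "B \<in> set base" "i \<in> set (labels_through f B)"
    by auto
  then obtain p where p: "f \<in> set (snd B)" "p \<in> set (fst B)" "snd p = i"
    unfolding in_labels_through_iff by blast
  have p_less: "fst p < n"
    using admissible_base_blockD(1)[OF admissible[OF B(1)]] p(2) by auto
  define g where "g = (v + n - fst p) mod n"
  have g: "g < n" "Inl (v, i) \<in> develop n g B" "Inr f \<in> develop n g B"
    using v mod_add_diff_cancel[OF p_less v] p unfolding Inl_in_develop_iff Inr_in_develop_iff g_def
    by auto
  show ?thesis
  proof (rule ex1I)
    show "develop n g B \<in> master_blocks n base \<and> Inl (v, i) \<in> develop n g B \<and> Inr f \<in> develop n g B"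
      using develop_in_master_blocks[OF B(1) g(1)] g(2,3) by blast
  next
    fix \<beta> assume \<beta>: "\<beta> \<in> master_blocks n base \<and> Inl (v, i) \<in> \<beta> \<and> Inr f \<in> \<beta>"
    then obtain B' g' where B': "B' \<in> set base" "g' < n" "\<beta> = develop n g' B'"
      by (auto elim: master_blocksE)
    then have "i \<in> set (labels_through f B')"
      using \<beta> by (auto simp: in_labels_through_iff Inr_in_develop_iff Inl_in_develop_iff)
    then have "B' = B"
      using distinct_concat_map_unique[OF conjunct1[OF labels] B'(1) B(1) _ B(2)] by blast
    then show "\<beta> = develop n g B"
      using develop_offset_unique[OF admissible[OF B(1)] g(1) B'(2) g(2)] \<beta> B'(3) by simp
  qed
qed

definition group_label :: "master_point \<Rightarrow> nat option" where
  "group_label = case_sum (Some \<circ> snd) (\<lambda>_. None)"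

lemma group_label_simps [simp]:
  "group_label (Inl p) = Some (snd p)"
  "group_label (Inr f) = None"
  by (simp_all add: group_label_def)

lemma same_master_group_iff:
  assumes "x \<in> master_points n m N" "y \<in> master_points n m N"
  shows "(\<exists>G\<in>master_groups n m N. x \<in> G \<and> y \<in> G) \<longleftrightarrow> group_label x = group_label y"
  using assms unfolding master_points_def master_groups_def by auto

lemma master_points_cases:
  assumes "x \<in> master_points n m N"
  obtains (finite) v i where "x = Inl (v, i)" "v < n" "i < m"
    | (infinite) f where "x = Inr f" "f < N"
  using assms unfolding master_points_def by auto

lemma develop_subset_master_points:
  "admissible_base_block n m N B \<Longrightarrow> 0 < n \<Longrightarrow> develop n g B \<subseteq> master_points n m N"
  unfolding develop_def block_points_def master_points_def admissible_base_block_def by auto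

lemma cross_pair_in_unique_master_block:
  assumes D: "difference_family n m N base"
    and x: "x \<in> master_points n m N" and y: "y \<in> master_points n m N"
    and labels: "group_label x \<noteq> group_label y"
  shows "\<exists>!\<beta>. \<beta> \<in> master_blocks n base \<and> x \<in> \<beta> \<and> y \<in> \<beta>"
proof -
  have sym: "(\<exists>!\<beta>. \<beta> \<in> master_blocks n base \<and> x \<in> \<beta> \<and> y \<in> \<beta>) \<longleftrightarrow>
      (\<exists>!\<beta>. \<beta> \<in> master_blocks n base \<and> y \<in> \<beta> \<and> x \<in> \<beta>)"
    by (simp add: conj_commute)
  show ?thesis
    using x
  proof (cases rule: master_points_cases)
    case x_finite: (finite v i)
    show ?thesis
      using y
    proof (cases rule: master_points_cases)
      case (finite w j)
      with x_finite labels consider "i < j" | "j < i" by fastforce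
      then show ?thesis
        using finite_pair_in_unique_developed_block[OF D] x_finite finite sym by cases auto
    next
      case (infinite f)
      then show ?thesis
        using finite_infinite_pair_in_unique_developed_block[OF D] x_finite by auto
    qed
  next
    case x_infinite: (infinite f)
    show ?thesis
      using y
    proof (cases rule: master_points_cases)
      case (finite w j)
      then show ?thesis
        using finite_infinite_pair_in_unique_developed_block[OF D] x_infinite sym by auto
    next
      case (infinite f')
      then show ?thesis
        using x_infinite labels by simp
    qed
  qed
qed

lemma cross_pair_design_master:
  assumes D: "difference_family n m N base" and "0 < n" and "0 < N"
  shows "cross_pair_design (master_points n m N) (master_groups n m N) (master_blocks n base)"
  unfolding cross_pair_design_def
proof (intro conjI)
  show "finite (master_points n m N)"
    by (simp add: master_points_def)
  show "\<forall>G\<in>master_groups n m N. G \<noteq> {} \<and> G \<subseteq> master_points n m N"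
    using assms(2,3) unfolding master_groups_def master_points_def by auto
  show "\<forall>G\<in>master_groups n m N. \<forall>G'\<in>master_groups n m N. G \<noteq> G' \<longrightarrow> G \<inter> G' = {}"
    unfolding master_groups_def by auto
  show "\<Union> (master_groups n m N) = master_points n m N"
    unfolding master_groups_def master_points_def by auto
  show "master_blocks n base \<noteq> {}"
    using difference_familyD(1)[OF D] assms(2) unfolding master_blocks_def by auto
  show "\<forall>\<beta>\<in>master_blocks n base. \<beta> \<subseteq> master_points n m N"
    using develop_subset_master_points[OF difference_familyD(2)[OF D] assms(2)]
    unfolding master_blocks_def by auto
  show "\<forall>x\<in>master_points n m N. \<forall>y\<in>master_points n m N.
      (\<forall>G\<in>master_groups n m N. \<not> (x \<in> G \<and> y \<in> G)) \<longrightarrow> (\<exists>!\<beta>. \<beta> \<in> master_blocks n base \<and> x \<in> \<beta> \<and> y \<in> \<beta>)"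
  proof (intro ballI impI)
    fix x y assume x: "x \<in> master_points n m N" and y: "y \<in> master_points n m N"
      and "\<forall>G\<in>master_groups n m N. \<not> (x \<in> G \<and> y \<in> G)"
    then have "group_label x \<noteq> group_label y"
      using same_master_group_iff[OF x y] by blast
    then show "\<exists>!\<beta>. \<beta> \<in> master_blocks n base \<and> x \<in> \<beta> \<and> y \<in> \<beta>"
      by (rule cross_pair_in_unique_master_block[OF D x y])
  qed
qed

section \<open>Ingredients\<close>

definition fibres :: "('a \<Rightarrow> 'b) \<Rightarrow> 'a set \<Rightarrow> 'a set set" where
  "fibres f V = (\<lambda>c. {x \<in> V. f x = c}) ` f ` V"

lemma same_fibre_iff:
  "x \<in> V \<Longrightarrow> y \<in> V \<Longrightarrow> (\<exists>g\<in>fibres f V. x \<in> g \<and> y \<in> g) \<longleftrightarrow> f x = f y"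
  unfolding fibres_def by auto

lemma same_fibre_image_iff:
  assumes "inj_on h V" "x \<in> V" "y \<in> V"
  shows "(\<exists>c\<in>(`) h ` fibres f V. h x \<in> c \<and> h y \<in> c) \<longleftrightarrow> f x = f y"
  using assms unfolding fibres_def by (auto simp: inj_on_image_mem_iff)

definition is_4GDD_table :: "'a list \<Rightarrow> ('a \<Rightarrow> nat) \<Rightarrow> 'a list list \<Rightarrow> bool" where
  "is_4GDD_table pts grp blks \<longleftrightarrow> blks \<noteq> [] \<and>
     (\<forall>b\<in>set blks. length b = 4 \<and> set b \<subseteq> set pts \<and> distinct (map grp b)) \<and>
     (\<forall>x\<in>set pts. \<forall>y\<in>set pts. grp x \<noteq> grp y \<longrightarrow> length (filter (\<lambda>b. x \<in> set b \<and> y \<in> set b) blks) = 1)"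

lemma length_filter_eq_1_unique:
  assumes "length (filter P xs) = 1" "a \<in> set xs" "P a" "b \<in> set xs" "P b"
  shows "a = b"
proof -
  obtain c where "filter P xs = [c]"
    using assms(1) by (cases "filter P xs") auto
  moreover have "a \<in> set (filter P xs)" "b \<in> set (filter P xs)"
    using assms(2-5) by simp_all
  ultimately show ?thesis
    by simp
qed

lemma is_4GDD_table_sound:
  assumes T: "is_4GDD_table pts grp blks"
  shows "is_4GDD (set pts) (fibres grp (set pts)) (set ` set blks)"
proof -
  have nonempty: "blks \<noteq> []"
    and blocks: "\<And>b. b \<in> set blks \<Longrightarrow> length b = 4 \<and> set b \<subseteq> set pts \<and> distinct (map grp b)"
    and cover: "\<And>x y. x \<in> set pts \<Longrightarrow> y \<in> set pts \<Longrightarrow> grp x \<noteq> grp y \<Longrightarrow>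
      length (filter (\<lambda>b. x \<in> set b \<and> y \<in> set b) blks) = 1"
    using T unfolding is_4GDD_table_def by blast+
  show ?thesis
  proof (rule is_4GDD_I)
    show "\<forall>b\<in>set ` set blks. b \<subseteq> set pts \<and> card b = 4"
      using blocks by (auto simp: distinct_card distinct_map)
    show "\<forall>x\<in>set pts. \<forall>y\<in>set pts. (\<forall>g\<in>fibres grp (set pts). \<not> (x \<in> g \<and> y \<in> g)) \<longrightarrow>
        (\<exists>!b. b \<in> set ` set blks \<and> x \<in> b \<and> y \<in> b)"
    proof (intro ballI impI)
      fix x y assume x: "x \<in> set pts" and y: "y \<in> set pts"
        and "\<forall>g\<in>fibres grp (set pts). \<not> (x \<in> g \<and> y \<in> g)"
      then have one: "length (filter (\<lambda>b. x \<in> set b \<and> y \<in> set b) blks) = 1"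
        using cover same_fibre_iff[OF x y] by blast
      then obtain b where "b \<in> set blks" "x \<in> set b" "y \<in> set b"
        by (metis (no_types, lifting) filter_False length_0_conv zero_neq_one)
      then show "\<exists>!b. b \<in> set ` set blks \<and> x \<in> b \<and> y \<in> b"
        using length_filter_eq_1_unique[OF one] by blast
    qed
    show "\<forall>g\<in>fibres grp (set pts). \<forall>x\<in>g. \<forall>y\<in>g. x \<noteq> y \<longrightarrow> \<not> (\<exists>b\<in>set ` set blks. x \<in> b \<and> y \<in> b)"
      using blocks unfolding fibres_def by (fastforce simp: distinct_map inj_on_def)
  qed (use nonempty in \<open>auto simp: fibres_def\<close>)
qed

definition point_grid :: "nat \<Rightarrow> (nat \<times> nat) list" where
  "point_grid k = List.product [0..<k] [0..<3]"

text \<open>Points \<open>(j, a)\<close> with \<open>j < k0\<close> form the groups \<open>{j} \<times> {0, 1, 2}\<close>; all other points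
  form a single group.\<close>

definition table_group :: "nat \<Rightarrow> nat \<times> nat \<Rightarrow> nat" where
  "table_group k0 x = min (fst x) k0"

lemma set_point_grid: "set (point_grid k) = {0..<k} \<times> {0..<3}"
  unfolding point_grid_def by auto

lemma group_label_translate [simp]: "group_label (translate n g x) = group_label x"
  by (cases x) auto

lemma inj_on_translate: "inj_on (translate n g) (master_points n m N)"
proof (rule inj_onI)
  fix x y assume "x \<in> master_points n m N" "y \<in> master_points n m N" "translate n g x = translate n g y"
  then show "x = y"
    unfolding master_points_def
    by (auto simp: add.commute[of _ g] dest: mod_add_left_cancel_less[of _ n])
qed

lemma distinct_block_points: "admissible_base_block n m N B \<Longrightarrow> distinct (block_points B)"
  unfolding block_points_def admissible_base_block_def
  by (auto simp: distinct_map)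

lemma group_label_block_points:
  "j < length (block_points B) \<Longrightarrow>
    group_label (block_points B ! j) = (if j < length (fst B) then Some (snd (fst B ! j)) else None)"
  unfolding block_points_def by (simp add: nth_append)

lemma group_label_block_points_eq_iff:
  assumes "admissible_base_block n m N B" "fst u < length (block_points B)" "fst v < length (block_points B)"
  shows "group_label (block_points B ! fst u) = group_label (block_points B ! fst v) \<longleftrightarrow>
    table_group (length (fst B)) u = table_group (length (fst B)) v"
  using admissible_base_blockD(2)[OF assms(1)]
  by (auto simp: group_label_block_points[OF assms(2)] group_label_block_points[OF assms(3)]
      table_group_def) (metis length_map nth_eq_iff_index_eq nth_map)

lemma same_master_group_developed_points_iff:
  assumes admissible: "admissible_base_block n m N B" and "0 < n"
    and u: "fst u < length (block_points B)" and v: "fst v < length (block_points B)"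
  shows "(\<exists>G\<in>master_groups n m N.
      translate n g (block_points B ! fst u) \<in> G \<and> translate n g (block_points B ! fst v) \<in> G) \<longleftrightarrow>
    table_group (length (fst B)) u = table_group (length (fst B)) v"
proof -
  have points: "translate n g (block_points B ! j) \<in> master_points n m N"
    if "j < length (block_points B)" for j
    using develop_subset_master_points[OF admissible \<open>0 < n\<close>, of g] that
    unfolding develop_def by auto
  show ?thesis
    using same_master_group_iff[OF points[OF u] points[OF v]] group_label_block_points_eq_iff[OF admissible u v]
    by simp
qed

lemma developed_block_has_ingredient:
  fixes B :: base_block
  defines "k0 \<equiv> length (fst B)" and "k \<equiv> length (block_points B)"
  assumes admissible: "admissible_base_block n m N B" and "0 < n"
    and table: "is_4GDD_table (point_grid k) (table_group k0) T"
  shows "\<exists>IG I. is_ingredient (master_groups n m N) {0..<3::nat} (develop n g B) IG I"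
proof -
  define ps where "ps = map (translate n g) (block_points B)"
  define h where "h = map_prod ((!) ps) (id :: nat \<Rightarrow> nat)"
  define V where "V = set (point_grid k)"
  have points: "set (block_points B) \<subseteq> master_points n m N"
    using admissible unfolding block_points_def master_points_def admissible_base_block_def by auto
  have "distinct ps"
    unfolding ps_def distinct_map
    using distinct_block_points[OF admissible] inj_on_subset[OF inj_on_translate points] by blast
  moreover have "length ps = k"
    by (simp add: ps_def k_def)
  ultimately have inj: "inj_on h V"
    unfolding h_def V_def set_point_grid by (intro map_prod_inj_on inj_on_nth) auto
  have nth_image_ps: "(!) ps ` {0..<k} = develop n g B"
    using nth_image[of k ps] \<open>length ps = k\<close> by (simp add: ps_def develop_def)
  have image: "h ` V = develop n g B \<times> {0..<3}"
    unfolding h_def V_def set_point_grid using nth_image_ps by (intro map_prod_surj_on) simp_all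
  have D: "is_4GDD (h ` V) ((`) h ` fibres (table_group k0) V) ((`) h ` set ` set T)"
    unfolding V_def using is_4GDD_image[OF is_4GDD_table_sound[OF table] inj[unfolded V_def]] .
  have labels: "(\<exists>G\<in>master_groups n m N. fst (h u) \<in> G \<and> fst (h v) \<in> G) \<longleftrightarrow>
      table_group k0 u = table_group k0 v" if "u \<in> V" "v \<in> V" for u v
    using that same_master_group_developed_points_iff[OF admissible \<open>0 < n\<close>, of u v g]
    by (simp add: h_def ps_def V_def set_point_grid k_def k0_def mem_Times_iff)
  show ?thesis
    unfolding is_ingredient_def image[symmetric]
  proof (rule exI[where x = "(`) h ` fibres (table_group k0) V"], rule exI[where x = "(`) h ` set ` set T"],
      intro conjI ballI)
    fix x y assume "x \<in> h ` V" "y \<in> h ` V"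
    then obtain u v where "u \<in> V" "v \<in> V" "x = h u" "y = h v"
      by blast
    then show "(\<exists>c\<in>(`) h ` fibres (table_group k0) V. x \<in> c \<and> y \<in> c) \<longleftrightarrow>
        (\<exists>G\<in>master_groups n m N. fst x \<in> G \<and> fst y \<in> G)"
      using same_fibre_image_iff[OF inj] labels by simp
  qed (rule D)
qed

definition gdd_3_4 :: "(nat \<times> nat) list list" where
  "gdd_3_4 = [[(0,0), (1,0), (2,0), (3,0)], [(0,0), (1,1), (2,1), (3,2)], [(0,0), (1,2), (2,2), (3,1)], [(0,1), (1,0), (2,1), (3,1)], [(0,1), (1,1), (2,2), (3,0)], [(0,1), (1,2), (2,0), (3,2)], [(0,2), (1,0), (2,2), (3,2)], [(0,2), (1,1), (2,0), (3,1)], [(0,2), (1,2), (2,1), (3,0)]]"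
definition gdd_3_5 :: "(nat \<times> nat) list list" where
  "gdd_3_5 = [[(0,0), (1,0), (2,0), (4,0)], [(0,0), (1,2), (3,0), (4,1)], [(0,0), (2,1), (3,1), (4,2)], [(0,0), (1,1), (2,2), (3,2)], [(1,0), (2,2), (3,1), (4,1)], [(0,1), (1,0), (3,2), (4,2)], [(0,2), (1,0), (2,1), (3,0)], [(1,2), (2,1), (3,2), (4,0)], [(0,1), (1,2), (2,0), (3,1)], [(0,1), (1,1), (2,1), (4,1)], [(0,1), (2,2), (3,0), (4,0)], [(0,2), (1,2), (2,2), (4,2)], [(0,2), (1,1), (3,1), (4,0)], [(0,2), (2,0), (3,2), (4,1)], [(1,1), (2,0), (3,0), (4,2)]]"
definition gdd_3_5_6 :: "(nat \<times> nat) list list" where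
  "gdd_3_5_6 = [[(0,0), (1,1), (2,0), (5,0)], [(2,1), (3,0), (4,2), (5,0)], [(0,1), (2,2), (3,2), (5,0)], [(0,2), (1,0), (4,1), (5,0)], [(1,2), (3,1), (4,0), (5,0)], [(0,0), (3,2), (4,0), (5,1)], [(1,0), (3,2), (4,2), (6,0)], [(1,0), (2,0), (3,0), (5,1)], [(0,1), (2,0), (4,0), (5,2)], [(1,0), (2,2), (4,0), (6,2)], [(0,1), (1,0), (2,1), (6,1)], [(0,0), (1,0), (3,1), (5,2)], [(1,1), (2,1), (4,0), (6,0)], [(0,2), (3,0), (4,0), (6,1)], [(0,0), (2,1), (4,1), (6,2)], [(0,2), (2,1), (3,1), (5,1)], [(1,2), (2,1), (3,2), (5,2)], [(0,2), (1,1), (3,2), (6,2)], [(0,2), (2,2), (4,2), (5,2)], [(0,0), (1,2), (4,2), (6,1)], [(0,0), (2,2), (3,0), (6,0)], [(0,2), (1,2), (2,0), (6,0)], [(0,1), (3,1), (4,1), (6,0)], [(0,1), (1,1), (4,2), (5,1)], [(0,1), (1,2), (3,0), (6,2)], [(1,1), (3,0), (4,1), (5,2)], [(1,1), (2,2), (3,1), (6,1)], [(1,2), (2,2), (4,1), (5,1)], [(2,0), (3,1), (4,2), (6,2)], [(2,0), (3,2), (4,1), (6,1)]]"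

definition ingredient_tables :: "((nat \<times> nat) \<times> (nat \<times> nat) list list) list" where
  "ingredient_tables = [((3, 1), gdd_3_4), ((4, 0), gdd_3_4), ((4, 1), gdd_3_5), ((5, 2), gdd_3_5_6)]"

lemma ingredient_tables_valid:
  "\<forall>((a, b), T) \<in> set ingredient_tables. is_4GDD_table (point_grid (a + b)) (table_group a) T"
  by code_simp

lemma inflated_master_groups_type:
  assumes "0 < n" "0 < N"
  shows "gdd_type ((\<lambda>G. G \<times> {0..<3::nat}) ` master_groups n m N) = replicate_mset m (3 * n) + {#3 * N#}"
proof -
  let ?inflate = "\<lambda>G. G \<times> {0..<3::nat}"
  let ?group = "\<lambda>i. ?inflate (Inl ` ({0..<n} \<times> {i}) :: master_point set)"
  let ?long = "?inflate (Inr ` {0..<N} :: master_point set)"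
  have groups: "?inflate ` master_groups n m N = ?group ` {0..<m} \<union> {?long}"
    unfolding master_groups_def by auto
  have long_new: "?long \<notin> ?group ` {0..<m}"
  proof
    assume "?long \<in> ?group ` {0..<m}"
    then obtain i where "?long = ?group i"
      by auto
    moreover have "(Inr 0, 0) \<in> ?long"
      using assms(2) by auto
    ultimately show False
      by auto
  qed
  have "inj_on ?group {0..<m}"
  proof (rule inj_onI)
    fix i j assume "?group i = ?group j"
    moreover have "(Inl (0, i), 0) \<in> ?group i"
      using assms(1) by auto
    ultimately show "i = j"
      by auto
  qed
  then have "mset_set (?inflate ` master_groups n m N) = image_mset ?group (mset_set {0..<m}) + {#?long#}"
    unfolding groups using long_new by (simp add: image_mset_mset_set)
  moreover have "card (?group i) = 3 * n" for i
    by (simp add: card_cartesian_product card_image)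
  moreover have "card ?long = 3 * N"
    by (simp add: card_cartesian_product card_image)
  ultimately show ?thesis
    unfolding gdd_type_def by (simp add: multiset.map_comp comp_def image_mset_const_eq mult.commute)
qed

lemma has_4GDD_of_difference_family:
  assumes D: "difference_family n m N base"
    and shapes: "\<forall>B\<in>set base. (length (fst B), length (snd B)) \<in> set (map fst ingredient_tables)"
    and "0 < n" "0 < N"
  shows "has_4GDD_of_type (replicate_mset m (3 * n) + {#3 * N#})"
proof -
  have "\<exists>IG I. is_ingredient (master_groups n m N) {0..<3::nat} \<beta> IG I" if \<beta>: "\<beta> \<in> master_blocks n base" for \<beta>
  proof -
    obtain B g where B: "B \<in> set base" "\<beta> = develop n g B"
      using \<beta> by (auto elim: master_blocksE)
    obtain T where "((length (fst B), length (snd B)), T) \<in> set ingredient_tables"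
      using shapes B(1) by force
    then have "is_4GDD_table (point_grid (length (block_points B))) (table_group (length (fst B))) T"
      using ingredient_tables_valid by (force simp: block_points_def)
    then show ?thesis
      using developed_block_has_ingredient[OF difference_familyD(2)[OF D B(1)] \<open>0 < n\<close>] B(2) by simp
  qed
  then obtain B where "is_4GDD (master_points n m N \<times> {0..<3::nat}) ((\<lambda>G. G \<times> {0..<3}) ` master_groups n m N) B"
    using wilson_fundamental_construction[OF cross_pair_design_master[OF D \<open>0 < n\<close> \<open>0 < N\<close>], of "{0..<3::nat}"]
    by auto
  then show ?thesis
    using has_4GDD_of_type_if_countable inflated_master_groups_type[OF \<open>0 < n\<close> \<open>0 < N\<close>] by metis
qed

section \<open>The base blocks\<close>

definition base318 :: "base_block list" where
  "base318 = [([(0,0), (18,1), (16,2), (18,3), (2,4)], [0, 1]),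
   ([(0,5), (0,6), (28,7)], [0]),
   ([(0,5), (29,6), (0,7)], [1]),
   ([(0,0), (2,1), (25,2), (11,3), (18,5)], [2, 3]),
   ([(0,4), (28,6), (9,7)], [2]),
   ([(0,4), (2,6), (5,7)], [3]),
   ([(0,0), (13,1), (22,2), (28,3), (14,6)], [4, 5]),
   ([(0,4), (5,5), (14,7)], [4]),
   ([(0,4), (16,5), (17,7)], [5]),
   ([(0,0), (12,1), (5,2), (5,3), (19,7)], [6, 7]),
   ([(0,4), (12,5), (13,6)], [6]),
   ([(0,4), (29,5), (8,6)], [7]),
   ([(0,0), (25,1), (26,2), (17,4), (1,5)], [8, 9]),
   ([(0,3), (4,6), (17,7)], [8]),
   ([(0,3), (20,6), (3,7)], [9]),
   ([(0,0), (19,1), (30,2), (13,4), (4,6)], [10, 11]),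
   ([(0,3), (25,5), (10,7)], [10]),
   ([(0,3), (4,5), (2,7)], [11]),
   ([(0,0), (17,1), (14,2), (30,4), (2,7)], [12, 13]),
   ([(0,3), (22,5), (19,6)], [12]),
   ([(0,3), (21,5), (12,6)], [13]),
   ([(0,0), (15,1), (3,2), (25,5), (12,6)], [14, 15]),
   ([(0,3), (2,4), (22,7)], [14]),
   ([(0,3), (4,4), (0,7)], [15]),
   ([(0,0), (8,1), (20,2), (10,5), (29,7)], [16, 17]),
   ([(0,3), (21,4), (15,6)], [16]),
   ([(0,3), (0,4), (27,6)], [17]),
   ([(0,0), (22,1), (4,2), (8,6), (8,7)], [18, 19]),
   ([(0,3), (24,4), (30,5)], [18]),
   ([(0,3), (27,4), (5,5)], [19]),
   ([(0,0), (4,1), (30,3), (28,4), (27,5)], [20, 21]),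
   ([(0,2), (14,6), (23,7)], [20]),
   ([(0,2), (1,6), (7,7)], [21]),
   ([(0,0), (7,1), (10,3), (19,4), (18,6)], [22, 23]),
   ([(0,2), (17,5), (21,7)], [22]),
   ([(0,2), (3,5), (8,7)], [23]),
   ([(0,0), (23,1), (17,3), (0,4), (1,7)], [24, 25]),
   ([(0,2), (25,5), (24,6)], [24]),
   ([(0,2), (23,5), (29,6)], [25]),
   ([(0,0), (27,1), (29,3), (7,5), (0,6)], [26, 27]),
   ([(0,2), (1,4), (29,7)], [26]),
   ([(0,2), (26,4), (20,7)], [27]),
   ([(0,0), (9,1), (26,3), (14,5), (13,7)], [28, 29]),
   ([(0,2), (29,4), (30,6)], [28]),
   ([(0,2), (3,4), (22,6)], [29]),
   ([(0,0), (30,1), (9,3), (20,6), (18,7)], [30, 31]),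
   ([(0,2), (27,4), (20,5)], [30]),
   ([(0,2), (19,4), (30,5)], [31]),
   ([(0,0), (21,1), (4,4), (11,5), (16,6)], [32, 33]),
   ([(0,2), (3,3), (26,7)], [32]),
   ([(0,2), (23,3), (27,7)], [33]),
   ([(0,0), (0,1), (6,4), (29,5), (24,7)], [34, 35]),
   ([(0,2), (16,3), (6,6)], [34]),
   ([(0,2), (19,3), (10,6)], [35]),
   ([(0,0), (10,1), (5,4), (28,6), (5,7)], [36, 37]),
   ([(0,2), (22,3), (4,5)], [36]),
   ([(0,2), (9,3), (19,5)], [37]),
   ([(0,0), (6,1), (19,5), (9,6), (3,7)], [38, 39]),
   ([(0,2), (12,3), (9,4)], [38]),
   ([(0,2), (20,3), (6,4)], [39]),
   ([(0,0), (7,2), (12,3), (7,4), (4,5)], [40, 41]),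
   ([(0,1), (19,6), (18,7)], [40]),
   ([(0,1), (22,6), (29,7)], [41]),
   ([(0,0), (23,2), (24,3), (27,4), (7,6)], [42, 43]),
   ([(0,1), (30,5), (22,7)], [42]),
   ([(0,1), (12,5), (14,7)], [43]),
   ([(0,0), (9,2), (19,3), (24,4), (15,7)], [44, 45]),
   ([(0,1), (18,5), (30,6)], [44]),
   ([(0,1), (27,5), (9,6)], [45]),
   ([(0,0), (17,2), (14,3), (30,5), (6,6)], [46, 47]),
   ([(0,1), (7,4), (13,7)], [46]),
   ([(0,1), (2,4), (6,7)], [47]),
   ([(0,0), (24,2), (20,3), (20,5), (27,7)], [48, 49]),
   ([(0,1), (21,4), (27,6)], [48]),
   ([(0,1), (17,4), (2,6)], [49]),
   ([(0,0), (2,2), (1,3), (19,6), (30,7)], [50, 51]),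
   ([(0,1), (5,4), (26,5)], [50]),
   ([(0,1), (3,4), (3,5)], [51]),
   ([(0,0), (8,2), (18,4), (6,5), (21,6)], [52, 53]),
   ([(0,1), (16,3), (5,7)], [52]),
   ([(0,1), (27,3), (20,7)], [53]),
   ([(0,0), (18,2), (29,4), (23,5), (0,7)], [54, 55]),
   ([(0,1), (8,3), (8,6)], [54]),
   ([(0,1), (12,3), (25,6)], [55]),
   ([(0,0), (29,2), (21,4), (10,6), (14,7)], [56, 57]),
   ([(0,1), (19,3), (0,5)], [56]),
   ([(0,1), (30,3), (1,5)], [57]),
   ([(0,0), (10,2), (26,5), (29,6), (20,7)], [58, 59]),
   ([(0,1), (29,3), (18,4)], [58]),
   ([(0,1), (4,3), (20,4)], [59]),
   ([(0,0), (0,3), (11,4), (24,5), (26,6)], [60, 61]),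
   ([(0,1), (3,2), (2,7)], [60]),
   ([(0,1), (0,2), (1,7)], [61]),
   ([(0,0), (22,3), (16,4), (2,5), (23,7)], [62, 63]),
   ([(0,1), (16,2), (6,6)], [62]),
   ([(0,1), (4,2), (12,6)], [63]),
   ([(0,0), (7,3), (8,4), (13,6), (6,7)], [64, 65]),
   ([(0,1), (25,2), (4,5)], [64]),
   ([(0,1), (30,2), (8,5)], [65]),
   ([(0,0), (25,3), (8,5), (3,6), (22,7)], [66, 67]),
   ([(0,1), (20,2), (27,4)], [66]),
   ([(0,1), (21,2), (29,4)], [67]),
   ([(0,1), (15,2), (22,3), (9,4), (17,5)], [68, 69]),
   ([(0,0), (23,6), (9,7)], [68]),
   ([(0,0), (15,6), (11,7)], [69]),
   ([(0,1), (8,2), (21,3), (28,4), (15,6)], [70, 71]),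
   ([(0,0), (17,5), (10,7)], [70]),
   ([(0,0), (5,5), (17,7)], [71]),
   ([(0,1), (26,2), (6,3), (16,4), (0,7)], [72, 73]),
   ([(0,0), (16,5), (27,6)], [72]),
   ([(0,0), (22,5), (5,6)], [73]),
   ([(0,1), (5,2), (13,3), (19,5), (23,6)], [74, 75]),
   ([(0,0), (26,4), (21,7)], [74]),
   ([(0,0), (25,4), (4,7)], [75]),
   ([(0,1), (22,2), (20,3), (9,5), (15,7)], [76, 77]),
   ([(0,0), (12,4), (2,6)], [76]),
   ([(0,0), (23,4), (30,6)], [77]),
   ([(0,1), (27,2), (14,3), (7,6), (27,7)], [78, 79]),
   ([(0,0), (1,4), (15,5)], [78]),
   ([(0,0), (10,4), (12,5)], [79]),
   ([(0,1), (2,2), (1,4), (28,5), (5,6)], [80, 81]),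
   ([(0,0), (4,3), (16,7)], [80]),
   ([(0,0), (6,3), (25,7)], [81]),
   ([(0,1), (7,2), (4,4), (22,5), (25,7)], [82, 83]),
   ([(0,0), (3,3), (1,6)], [82]),
   ([(0,0), (27,3), (24,6)], [83]),
   ([(0,1), (18,2), (11,4), (20,6), (30,7)], [84, 85]),
   ([(0,0), (13,3), (21,5)], [84]),
   ([(0,0), (2,3), (3,5)], [85]),
   ([(0,1), (6,2), (6,5), (0,6), (23,7)], [86, 87]),
   ([(0,0), (21,3), (3,4)], [86]),
   ([(0,0), (16,3), (22,4)], [87]),
   ([(0,1), (11,3), (10,4), (14,5), (10,6)], [88, 89]),
   ([(0,0), (6,2), (28,7)], [88]),
   ([(0,0), (11,2), (26,7)], [89]),
   ([(0,1), (7,3), (30,4), (25,5), (12,7)], [90, 91]),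
   ([(0,0), (15,2), (11,6)], [90]),
   ([(0,0), (1,2), (17,6)], [91]),
   ([(0,1), (23,3), (0,4), (24,6), (8,7)], [92, 93]),
   ([(0,0), (12,2), (13,5)], [92]),
   ([(0,0), (21,2), (28,5)], [93]),
   ([(0,1), (28,3), (24,5), (13,6), (3,7)], [94, 95]),
   ([(0,0), (27,2), (9,4)], [94]),
   ([(0,0), (28,2), (15,4)], [95]),
   ([(0,2), (24,3), (5,4), (8,5), (0,6)], [96, 97]),
   ([(0,0), (1,1), (12,7)], [96]),
   ([(0,0), (28,1), (7,7)], [97]),
   ([(0,2), (14,3), (2,4), (12,5), (25,7)], [98, 99]),
   ([(0,0), (24,1), (22,6)], [98]),
   ([(0,0), (11,1), (25,6)], [99]),
   ([(0,2), (21,3), (12,4), (26,6), (11,7)], [100, 101]),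
   ([(0,0), (20,1), (9,5)], [100]),
   ([(0,0), (16,1), (0,5)], [101]),
   ([(0,2), (25,3), (11,5), (28,6), (2,7)], [102, 103]),
   ([(0,0), (29,1), (20,4)], [102]),
   ([(0,0), (26,1), (14,4)], [103]),
   ([(0,0), (5,1), (19,2), (23,3)], [104]),
   ([(0,4), (22,5), (10,6), (11,7)], [104]),
   ([(0,0), (14,1), (0,2), (15,3)], [105]),
   ([(0,4), (20,5), (29,6), (16,7)], [105]),
   ([(0,0), (3,1), (13,2), (8,3)], []),
   ([(0,4), (1,5), (17,6), (12,7)], [])]"

definition base321 :: "base_block list" where
  "base321 = map (\<lambda>B. if snd B = [] then (fst B, [106]) else B) base318"

lemma difference_family_base318: "difference_family 31 8 106 base318"
  by code_simp

lemma ingredient_shapes_base318: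
  "\<forall>B\<in>set base318. (length (fst B), length (snd B)) \<in> set (map fst ingredient_tables)"
  by code_simp

lemma difference_family_base321: "difference_family 31 8 107 base321"
  by code_simp

lemma ingredient_shapes_base321:
  "\<forall>B\<in>set base321. (length (fst B), length (snd B)) \<in> set (map fst ingredient_tables)"
  by code_simp

theorem lemma2p7:
  shows "has_4GDD_of_type (replicate_mset 8 93 + {#318#})
       \<and> has_4GDD_of_type (replicate_mset 8 93 + {#321#})"
  using has_4GDD_of_difference_family[OF difference_family_base318 ingredient_shapes_base318]
    has_4GDD_of_difference_family[OF difference_family_base321 ingredient_shapes_base321]
  by simp

end
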